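(* Let $R$ be any binary relation on $U$. Then $\mathrm{DM(RS)}$ is a subdirect product of the complete lattices $\wp(U)^{\blacktriangledown}$ and $\wp(U)^{\blacktriangle}$; that is, $\mathrm{DM(RS)}$ is a complete sublattice of $\wp(U)^{\blacktriangledown}\times\wp(U)^{\blacktriangle}$ and both canonical projections restricted to $\mathrm{DM(RS)}$ are surjective onto $\wp(U)^{\blacktriangledown}$ and $\wp(U)^{\blacktriangle}$ respectively.
   Context: Let $U$ be a set and $R\subseteq U\times U$ a binary relation. For $x\in U$, $R(x)=\{y\in U\mid (x,y)\in R\}$ and $\breve R(x)=\{y\in U\mid (y,x)\in R\}$. For $X\subseteq U$: $X^{\blacktriangledown}=\{x\in U\mid R(x)\subseteq X\}$, $X^{\blacktriangle}=\{x\in U\mid R(x)\cap X\neq\emptyset\}$, $X^{\triangledown}=\{x\in U\mid \breve R(x)\subseteq X\}$, $X^{\vartriangle}=\{x\in U\mid \breve R(x)\cap X\neq\emptyset\}$; composites like $X^{\vartriangle\blacktriangledown}$ mean $(X^{\vartriangle})^{\blacktriangledown}$. $\wp(U)^{\blacktriangledown}=\{X^{\blacktriangledown}\mid X\subseteq U\}$ is a complete lattice under $\subseteq$ with meets $\bigcap$ and joins $(\bigcup_i X_i)^{\vartriangle\blacktriangledown}$; $\wp(U)^{\blacktriangle}=\{X^{\blacktriangle}\mid X\subseteq U\}$ is a complete lattice with joins $\bigcup$ and meets $(\bigcap_iY_i)^{\triangledown\blacktriangle}$; their product is ordered coordinatewise. $\mathcal S=\{x\in U\mid |R(x)|=1\}$.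 $\mathrm{RS}=\{(X^{\blacktriangledown},X^{\blacktriangle})\mid X\subseteq U\}$ ordered coordinatewise; $\mathrm{DM(RS)}$ is its Dedekind–MacNeille completion, identified with $\{(A,B)\in\wp(U)^{\blacktriangledown}\times\wp(U)^{\blacktriangle}\mid A^{\vartriangle\blacktriangle}\subseteq B,\ A\cap\mathcal S=B\cap\mathcal S\}$, whose arbitrary meets and joins are $\bigwedge_i(X_i,Y_i)=(\bigcap_iX_i,(\bigcap_iY_i)^{\triangledown\blacktriangle})$ and $\bigvee_i(X_i,Y_i)=((\bigcup_iX_i)^{\vartriangle\blacktriangledown},\bigcup_iY_i)$. *)

theory Defs
  imports Main
begin

definition nbr :: "('a \<times> 'a) set \<Rightarrow> 'a \<Rightarrow> 'a set" where
  "nbr R x = {y. (x, y) \<in> R}"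

definition inbr :: "('a \<times> 'a) set \<Rightarrow> 'a \<Rightarrow> 'a set" where
  "inbr R x = {y. (y, x) \<in> R}"

definition lowR :: "'a set \<Rightarrow> ('a \<times> 'a) set \<Rightarrow> 'a set \<Rightarrow> 'a set" where
  "lowR U R X = {x \<in> U. nbr R x \<subseteq> X}"

definition uppR :: "'a set \<Rightarrow> ('a \<times> 'a) set \<Rightarrow> 'a set \<Rightarrow> 'a set" where
  "uppR U R X = {x \<in> U. nbr R x \<inter> X \<noteq> {}}"

definition lowRi :: "'a set \<Rightarrow> ('a \<times> 'a) set \<Rightarrow> 'a set \<Rightarrow> 'a set" where
  "lowRi U R X = {x \<in> U. inbr R x \<subseteq> X}"

definition uppRi :: "'a set \<Rightarrow> ('a \<times> 'a) set \<Rightarrow> 'a set \<Rightarrow> 'a set" where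
  "uppRi U R X = {x \<in> U. inbr R x \<inter> X \<noteq> {}}"

definition LowSets :: "'a set \<Rightarrow> ('a \<times> 'a) set \<Rightarrow> 'a set set" where
  "LowSets U R = {lowR U R X | X. X \<subseteq> U}"

definition UppSets :: "'a set \<Rightarrow> ('a \<times> 'a) set \<Rightarrow> 'a set set" where
  "UppSets U R = {uppR U R X | X. X \<subseteq> U}"

definition Sing :: "'a set \<Rightarrow> ('a \<times> 'a) set \<Rightarrow> 'a set" where
  "Sing U R = {x \<in> U. \<exists>y. nbr R x = {y}}"

(* DM(RS), in the identification given in the paper *)
definition DMRS :: "'a set \<Rightarrow> ('a \<times> 'a) set \<Rightarrow> ('a set \<times> 'a set) set" where
  "DMRS U R = {(A, B). A \<in> LowSets U R \<and> B \<in> UppSets U R \<and>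
                 uppR U R (uppRi U R A) \<subseteq> B \<and> A \<inter> Sing U R = B \<inter> Sing U R}"

text \<open>Arbitrary meets and joins in the product lattice
  wp(U)^{blacktriangledown} x wp(U)^{blacktriangle}, coordinatewise
  (the empty meet is the top element; intersections are taken inside U).\<close>

definition prodMeet :: "'a set \<Rightarrow> ('a \<times> 'a) set \<Rightarrow> ('a set \<times> 'a set) set \<Rightarrow> 'a set \<times> 'a set" where
  "prodMeet U R F = (U \<inter> \<Inter>(fst ` F), uppR U R (lowRi U R (U \<inter> \<Inter>(snd ` F))))"

definition prodJoin :: "'a set \<Rightarrow> ('a \<times> 'a) set \<Rightarrow> ('a set \<times> 'a set) set \<Rightarrow> 'a set \<times> 'a set" where
  "prodJoin U R F = (lowR U R (uppRi U R (\<Union>(fst ` F))), \<Union>(snd ` F))"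

end

theory Submission
  imports Defs
begin

text \<open>For R \<subseteq> U \<times> U the operators form two Galois connections on the subsets of U:
  X^\<vartriangle> \<subseteq> Y iff X \<subseteq> Y^\<blacktriangledown>, and X^\<blacktriangle> \<subseteq> Y iff X \<subseteq> Y^\<triangledown>.
  Hence the members of \<wp>(U)^\<blacktriangledown> are the closed sets of the closure operator
  X \<mapsto> X^\<vartriangle>^\<blacktriangledown> and are closed under intersections, while the members of
  \<wp>(U)^\<blacktriangle> are the open sets of the interior operator X \<mapsto> X^\<triangledown>^\<blacktriangle> and
  are closed under unions. The coupling condition A \<inter> \<S> = B \<inter> \<S> of DM(RS) survives meets
  and joins because on \<S>, where the neighbourhood is a singleton, the lower and the upper
  approximation of any set coincide. Surjectivity of the projections is witnessed by the pairs
  (X^\<blacktriangledown>, X^\<blacktriangle>).\<close>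

lemma uppRi_subset_iff:
  assumes "R \<subseteq> U \<times> U" and "A \<subseteq> U"
  shows "uppRi U R A \<subseteq> X \<longleftrightarrow> A \<subseteq> lowR U R X"
  using assms by (auto simp: uppRi_def lowR_def nbr_def inbr_def)

lemma uppR_subset_iff:
  assumes "R \<subseteq> U \<times> U" and "A \<subseteq> U"
  shows "uppR U R A \<subseteq> X \<longleftrightarrow> A \<subseteq> lowRi U R X"
  using assms by (auto simp: uppR_def lowRi_def nbr_def inbr_def)

lemma lowR_mono: "X \<subseteq> Y \<Longrightarrow> lowR U R X \<subseteq> lowR U R Y"
  by (auto simp: lowR_def)

lemma uppR_mono: "X \<subseteq> Y \<Longrightarrow> uppR U R X \<subseteq> uppR U R Y"
  by (auto simp: uppR_def)

lemma uppRi_mono: "X \<subseteq> Y \<Longrightarrow> uppRi U R X \<subseteq> uppRi U R Y"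
  by (auto simp: uppRi_def)

lemma lowRi_mono: "X \<subseteq> Y \<Longrightarrow> lowRi U R X \<subseteq> lowRi U R Y"
  by (auto simp: lowRi_def)

lemma subset_lowR_uppRi: "R \<subseteq> U \<times> U \<Longrightarrow> A \<subseteq> U \<Longrightarrow> A \<subseteq> lowR U R (uppRi U R A)"
  using uppRi_subset_iff by blast

lemma uppRi_lowR_subset: "uppRi U R (lowR U R X) \<subseteq> X"
  by (auto simp: uppRi_def lowR_def nbr_def inbr_def)

lemma uppR_lowRi_subset: "uppR U R (lowRi U R X) \<subseteq> X"
  by (auto simp: uppR_def lowRi_def nbr_def inbr_def)

lemma uppR_UN: "uppR U R (\<Union>i\<in>I. X i) = (\<Union>i\<in>I. uppR U R (X i))"
  by (auto simp: uppR_def)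

lemma uppRi_UN: "uppRi U R (\<Union>i\<in>I. X i) = (\<Union>i\<in>I. uppRi U R (X i))"
  by (auto simp: uppRi_def)

lemma lowR_in_LowSets: "X \<subseteq> U \<Longrightarrow> lowR U R X \<in> LowSets U R"
  by (auto simp: LowSets_def)

lemma uppR_in_UppSets: "X \<subseteq> U \<Longrightarrow> uppR U R X \<in> UppSets U R"
  by (auto simp: UppSets_def)

lemma LowSets_iff:
  assumes "R \<subseteq> U \<times> U"
  shows "A \<in> LowSets U R \<longleftrightarrow> A \<subseteq> U \<and> lowR U R (uppRi U R A) \<subseteq> A"
proof
  assume "A \<in> LowSets U R"
  then obtain X where A: "A = lowR U R X" by (auto simp: LowSets_def)
  have "lowR U R (uppRi U R A) \<subseteq> A"
    unfolding A by (rule lowR_mono[OF uppRi_lowR_subset])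
  moreover have "A \<subseteq> U"
    unfolding A by (auto simp: lowR_def)
  ultimately show "A \<subseteq> U \<and> lowR U R (uppRi U R A) \<subseteq> A"
    by blast
next
  assume "A \<subseteq> U \<and> lowR U R (uppRi U R A) \<subseteq> A"
  then have "A = lowR U R (uppRi U R A)"
    using subset_lowR_uppRi[OF assms] by blast
  then show "A \<in> LowSets U R"
    by (metis lowR_in_LowSets uppRi_def Collect_subset)
qed

lemma UppSets_iff:
  assumes "R \<subseteq> U \<times> U"
  shows "B \<in> UppSets U R \<longleftrightarrow> B \<subseteq> U \<and> B \<subseteq> uppR U R (lowRi U R B)"
proof
  assume "B \<in> UppSets U R"
  then obtain X where X: "B = uppR U R X" "X \<subseteq> U" by (auto simp: UppSets_def)
  then have "X \<subseteq> lowRi U R B"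
    using uppR_subset_iff[OF assms X(2)] by blast
  then show "B \<subseteq> U \<and> B \<subseteq> uppR U R (lowRi U R B)"
    using X uppR_mono[of X "lowRi U R B" U R] by (auto simp: uppR_def)
next
  assume "B \<subseteq> U \<and> B \<subseteq> uppR U R (lowRi U R B)"
  then have "B = uppR U R (lowRi U R B)"
    using uppR_lowRi_subset[of U R B] by blast
  then show "B \<in> UppSets U R"
    by (metis uppR_in_UppSets lowRi_def Collect_subset)
qed

lemma LowSets_Inter:
  assumes R: "R \<subseteq> U \<times> U" and \<A>: "\<A> \<subseteq> LowSets U R"
  shows "U \<inter> \<Inter>\<A> \<in> LowSets U R"
proof -
  have "lowR U R (uppRi U R (U \<inter> \<Inter>\<A>)) \<subseteq> A" if "A \<in> \<A>" for A
  proof -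
    have "lowR U R (uppRi U R (U \<inter> \<Inter>\<A>)) \<subseteq> lowR U R (uppRi U R A)"
      using that by (intro lowR_mono uppRi_mono) blast
    also have "\<dots> \<subseteq> A"
      using that \<A> LowSets_iff[OF R] by blast
    finally show ?thesis .
  qed
  then show ?thesis
    unfolding LowSets_iff[OF R] by (auto simp: lowR_def)
qed

lemma UppSets_Union:
  assumes R: "R \<subseteq> U \<times> U" and \<B>: "\<B> \<subseteq> UppSets U R"
  shows "\<Union>\<B> \<in> UppSets U R"
proof -
  have "B \<subseteq> uppR U R (lowRi U R (\<Union>\<B>))" if "B \<in> \<B>" for B
  proof -
    have "B \<subseteq> uppR U R (lowRi U R B)"
      using that \<B> UppSets_iff[OF R] by blast
    also have "\<dots> \<subseteq> uppR U R (lowRi U R (\<Union>\<B>))"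
      using that by (intro uppR_mono lowRi_mono) blast
    finally show ?thesis .
  qed
  moreover have "\<Union>\<B> \<subseteq> U"
    using \<B> UppSets_iff[OF R] by blast
  ultimately show ?thesis
    unfolding UppSets_iff[OF R] by blast
qed

lemma lowR_Int_Sing: "lowR U R X \<inter> Sing U R = uppR U R X \<inter> Sing U R"
  by (auto simp: lowR_def uppR_def Sing_def)

lemma lowR_uppR_in_DMRS:
  assumes R: "R \<subseteq> U \<times> U" and X: "X \<subseteq> U"
  shows "(lowR U R X, uppR U R X) \<in> DMRS U R"
  unfolding DMRS_def
  using lowR_in_LowSets[OF X] uppR_in_UppSets[OF X] uppR_mono[OF uppRi_lowR_subset[of U R X]]
    lowR_Int_Sing[of U R X]
  by blast

lemma prodMeet_in_DMRS:
  assumes R: "R \<subseteq> U \<times> U" and F: "F \<subseteq> DMRS U R"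
  shows "prodMeet U R F \<in> DMRS U R"
proof -
  define A where "A = U \<inter> \<Inter>(fst ` F)"
  define Y where "Y = U \<inter> \<Inter>(snd ` F)"
  have F_DMRS: "uppR U R (uppRi U R (fst p)) \<subseteq> snd p"
      "fst p \<inter> Sing U R = snd p \<inter> Sing U R" if "p \<in> F" for p
    using subsetD[OF F that] by (auto simp: DMRS_def case_prod_beta)
  have A_U: "A \<subseteq> U" by (simp add: A_def)
  have "fst ` F \<subseteq> LowSets U R"
    using F by (auto simp: DMRS_def)
  then have A_Low: "A \<in> LowSets U R"
    unfolding A_def by (rule LowSets_Inter[OF R])
  have "uppR U R (uppRi U R A) \<subseteq> snd p" if "p \<in> F" for p
  proof -
    have "uppR U R (uppRi U R A) \<subseteq> uppR U R (uppRi U R (fst p))"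
      using that by (intro uppR_mono uppRi_mono) (auto simp: A_def)
    with F_DMRS(1)[OF that] show ?thesis by blast
  qed
  moreover have "uppR U R (uppRi U R A) \<subseteq> U"
    by (auto simp: uppR_def)
  ultimately have "uppR U R (uppRi U R A) \<subseteq> Y"
    unfolding Y_def by blast
  then have "uppRi U R A \<subseteq> lowRi U R Y"
    using uppR_subset_iff[OF R] by (auto simp: uppRi_def)
  then have coupling: "uppR U R (uppRi U R A) \<subseteq> uppR U R (lowRi U R Y)"
    by (rule uppR_mono)
  have "A \<inter> Sing U R \<subseteq> uppR U R (lowRi U R Y)"
    using subset_lowR_uppRi[OF R A_U] lowR_Int_Sing[of U R "uppRi U R A"] coupling by blast
  moreover have "x \<in> A" if "x \<in> uppR U R (lowRi U R Y)" "x \<in> Sing U R" for x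
  proof -
    have "x \<in> Y"
      using that(1) uppR_lowRi_subset[of U R Y] by blast
    then have "x \<in> fst p" if "p \<in> F" for p
      using F_DMRS(2)[OF that] \<open>x \<in> Sing U R\<close> that by (auto simp: Y_def)
    then show ?thesis
      using \<open>x \<in> Y\<close> by (auto simp: A_def Y_def)
  qed
  ultimately have "A \<inter> Sing U R = uppR U R (lowRi U R Y) \<inter> Sing U R"
    by blast
  moreover have "uppR U R (lowRi U R Y) \<in> UppSets U R"
    by (rule uppR_in_UppSets) (auto simp: lowRi_def)
  ultimately show ?thesis
    using A_Low coupling by (simp add: prodMeet_def DMRS_def A_def Y_def)
qed

lemma prodJoin_in_DMRS:
  assumes R: "R \<subseteq> U \<times> U" and F: "F \<subseteq> DMRS U R"
  shows "prodJoin U R F \<in> DMRS U R"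
proof -
  define W where "W = \<Union>(fst ` F)"
  define A where "A = lowR U R (uppRi U R W)"
  define B where "B = \<Union>(snd ` F)"
  have F_DMRS: "uppR U R (uppRi U R (fst p)) \<subseteq> snd p"
      "fst p \<inter> Sing U R = snd p \<inter> Sing U R" if "p \<in> F" for p
    using subsetD[OF F that] by (auto simp: DMRS_def case_prod_beta)
  have W_U: "W \<subseteq> U"
    using F by (auto simp: W_def DMRS_def LowSets_def lowR_def)
  have "snd ` F \<subseteq> UppSets U R"
    using F by (auto simp: DMRS_def)
  then have B_Upp: "B \<in> UppSets U R"
    unfolding B_def by (rule UppSets_Union[OF R])
  have W_B: "uppR U R (uppRi U R W) \<subseteq> B"
    unfolding W_def B_def uppRi_UN uppR_UN
    by (rule UN_mono[OF order.refl F_DMRS(1)])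
  have "uppR U R (uppRi U R A) \<subseteq> uppR U R (uppRi U R W)"
    unfolding A_def by (intro uppR_mono uppRi_lowR_subset)
  with W_B have coupling: "uppR U R (uppRi U R A) \<subseteq> B"
    by blast
  have "A \<inter> Sing U R \<subseteq> B"
    unfolding A_def using lowR_Int_Sing[of U R "uppRi U R W"] W_B by blast
  moreover have "B \<inter> Sing U R \<subseteq> W"
    unfolding B_def W_def using F_DMRS(2) by blast
  then have "B \<inter> Sing U R \<subseteq> A"
    unfolding A_def using subset_lowR_uppRi[OF R W_U] by blast
  ultimately have "A \<inter> Sing U R = B \<inter> Sing U R"
    by blast
  moreover have "A \<in> LowSets U R"
    unfolding A_def by (rule lowR_in_LowSets) (auto simp: uppRi_def)
  ultimately show ?thesis
    using B_Upp coupling by (simp add: prodJoin_def DMRS_def A_def B_def W_def)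
qed

theorem mainTheorem18:
  fixes U :: "'a set" and R :: "('a \<times> 'a) set"
  assumes "R \<subseteq> U \<times> U"
  shows "DMRS U R \<subseteq> LowSets U R \<times> UppSets U R
     \<and> (\<forall>F. F \<subseteq> DMRS U R \<longrightarrow> prodMeet U R F \<in> DMRS U R \<and> prodJoin U R F \<in> DMRS U R)
     \<and> fst ` DMRS U R = LowSets U R
     \<and> snd ` DMRS U R = UppSets U R"
proof (intro conjI allI impI)
  show "DMRS U R \<subseteq> LowSets U R \<times> UppSets U R"
    by (auto simp: DMRS_def)
  show "prodMeet U R F \<in> DMRS U R" "prodJoin U R F \<in> DMRS U R" if "F \<subseteq> DMRS U R" for F
    using prodMeet_in_DMRS[OF assms that] prodJoin_in_DMRS[OF assms that] .
  have "A \<in> fst ` DMRS U R" if A: "A \<in> LowSets U R" for A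
  proof -
    obtain X where "A = lowR U R X" "X \<subseteq> U"
      using A unfolding LowSets_def by blast
    with lowR_uppR_in_DMRS[OF assms] show ?thesis
      by (metis fst_conv image_eqI)
  qed
  then show "fst ` DMRS U R = LowSets U R"
    by (auto simp: DMRS_def)
  have "B \<in> snd ` DMRS U R" if B: "B \<in> UppSets U R" for B
  proof -
    obtain X where "B = uppR U R X" "X \<subseteq> U"
      using B unfolding UppSets_def by blast
    with lowR_uppR_in_DMRS[OF assms] show ?thesis
      by (metis snd_conv image_eqI)
  qed
  then show "snd ` DMRS U R = UppSets U R"
    by (auto simp: DMRS_def)
qed

end
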